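(* Let $\mu$ be a joint distribution of a triple $(X,A,Y)$ with $X\in\mathcal{X}\subseteq\mathbb{R}^d$, $A\in\{0,1\}$ with $\Pr(A=0),\Pr(A=1)>0$, and $Y\in[-1,1]$. Let $\rho\ge0$ and let $h:\mathcal{X}\to\mathbb{R}$ satisfy $|h(x)-h(x')|\le\rho\|x-x'\|$ for all $x,x'\in\mathcal{X}$ ($\rho$-individual fairness), and let $\widehat{Y}=h(X)$. Then $$|\varepsilon_{1,\mu_0}(\widehat{Y})-\varepsilon_{1,\mu_1}(\widehat{Y})|\le\sqrt{\rho^2+1}\cdot W_1(\mu_0,\mu_1).$$
   Context: $\|\cdot\|$ is the Euclidean norm. For $a\in\{0,1\}$, $\mu_a$ is the conditional distribution of $(X,Y)$ given $A=a$, viewed as a distribution on $\mathbb{R}^{d+1}$. $\varepsilon_{1,\nu}(\widehat{Y}):=\mathbb{E}_\nu[|\widehat{Y}-Y|]$. $W_1(\mu_0,\mu_1)=\inf_\gamma\int\|(x,y)-(x',y')\|\,d\gamma$ over couplings $\gamma$ of $\mu_0,\mu_1$, with Euclidean norm on $\mathbb{R}^{d+1}$. *)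

theory Defs
  imports "HOL-Probability.Probability"
begin

text \<open>Conditional law of (X,Y) given A = a, on R^d x R (product norm is Euclidean).\<close>
definition cond_law ::
  "'w measure \<Rightarrow> ('w \<Rightarrow> 'a::euclidean_space) \<Rightarrow> ('w \<Rightarrow> nat) \<Rightarrow> ('w \<Rightarrow> real) \<Rightarrow> nat \<Rightarrow> ('a \<times> real) measure"
  where "cond_law M X A Y a =
    distr (uniform_measure M {\<omega> \<in> space M. A \<omega> = a}) borel (\<lambda>\<omega>. (X \<omega>, Y \<omega>))"

definition couplings :: "'b measure \<Rightarrow> 'b measure \<Rightarrow> ('b \<times> 'b) measure set"
  where "couplings P Q = {\<gamma>. sets \<gamma> = sets (P \<Otimes>\<^sub>M Q) \<and>
      distr \<gamma> P fst = P \<and> distr \<gamma> Q snd = Q}"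

definition W1 :: "('b::metric_space) measure \<Rightarrow> 'b measure \<Rightarrow> ennreal"
  where "W1 P Q = (INF \<gamma> \<in> couplings P Q. \<integral>\<^sup>+ z. ennreal (dist (fst z) (snd z)) \<partial>\<gamma>)"

definition eps1 :: "('a \<times> real) measure \<Rightarrow> ('a \<Rightarrow> real) \<Rightarrow> real"
  where "eps1 \<nu> h = (\<integral>z. \<bar>h (fst z) - snd z\<bar> \<partial>\<nu>)"

end

theory Submission
  imports Defs
begin

text \<open>
  Extend h from \<X> to a \<rho>-Lipschitz function H on the whole space (McShane); since X lies in
  \<X> almost surely, replacing h by H changes neither error. For the Euclidean norm on the
  product, the residual (x, y) \<mapsto> |H x - y| is sqrt (\<rho>^2 + 1)-Lipschitz, by Cauchy-Schwarz
  applied to \<rho> \<parallel>x - x'\<parallel> + |y - y'|. Against any coupling \<gamma> of the two conditional laws, the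
  difference of the errors is the \<gamma>-integral of the difference of the residuals at the two
  coordinates, hence at most sqrt (\<rho>^2 + 1) times the transport cost of \<gamma>; taking the infimum
  over \<gamma> gives the bound (the easy half of Kantorovich-Rubinstein duality).
\<close>

lemma lipschitz_on_extend_real:
  fixes f :: "'a::metric_space \<Rightarrow> real"
  assumes f: "C-lipschitz_on S f"
  obtains g where "C-lipschitz_on UNIV g" and "\<And>x. x \<in> S \<Longrightarrow> g x = f x"
proof (cases "S = {}")
  case True
  then show ?thesis
    using that[of "\<lambda>_. 0"] lipschitz_on_nonneg[OF f] by (simp add: lipschitz_on_def)
next
  case False
  then obtain s0 where s0: "s0 \<in> S" by blast
  have C: "C \<ge> 0" using lipschitz_on_nonneg[OF f] .
  have f_le: "f s \<le> f t + C * dist s t" if "s \<in> S" "t \<in> S" for s t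
    using lipschitz_onD[OF f that] by (simp add: dist_real_def)
  have dist_le: "C * dist x t \<le> C * dist x y + C * dist y t" for x y t :: 'a
    using mult_left_mono[OF dist_triangle[of x t y] C] by (simp add: distrib_left)
  define g where "g x = (INF t\<in>S. f t + C * dist x t)" for x
  have bdd: "bdd_below ((\<lambda>t. f t + C * dist x t) ` S)" for x
  proof (rule bdd_belowI2)
    fix t assume "t \<in> S"
    then show "f s0 - C * dist s0 x \<le> f t + C * dist x t"
      using f_le[OF s0 \<open>t \<in> S\<close>] dist_le[of s0 t x] by linarith
  qed
  have g_le: "g x \<le> f t + C * dist x t" if "t \<in> S" for x t
    unfolding g_def using cINF_lower[OF bdd that] .
  have g_eq: "g x = f x" if "x \<in> S" for x
  proof (rule antisym)
    show "g x \<le> f x" using g_le[OF that, of x] by simp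
    show "f x \<le> g x" unfolding g_def using False f_le[OF that] by (intro cINF_greatest)
  qed
  have g_le_g: "g x \<le> g y + C * dist x y" for x y
  proof -
    have "g x - C * dist x y \<le> g y"
      unfolding g_def[of y] using False
    proof (intro cINF_greatest)
      fix t assume "t \<in> S"
      then show "g x - C * dist x y \<le> f t + C * dist y t"
        using g_le[of t x] dist_le[of x t y] by linarith
    qed
    then show ?thesis by simp
  qed
  have "C-lipschitz_on UNIV g"
  proof (intro lipschitz_onI C)
    fix x y
    show "dist (g x) (g y) \<le> C * dist x y"
      using g_le_g[of x y] g_le_g[of y x] by (simp add: dist_real_def dist_commute abs_le_iff)
  qed
  with g_eq show ?thesis using that by blast
qed

lemma lipschitz_on_abs_residual:
  fixes H :: "'a::metric_space \<Rightarrow> real"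
  assumes "C-lipschitz_on UNIV H"
  shows "(sqrt (C\<^sup>2 + 1))-lipschitz_on UNIV (\<lambda>z. \<bar>H (fst z) - snd z\<bar>)"
proof (rule lipschitz_onI)
  fix z z' :: "'a \<times> real"
  obtain x y x' y' where z: "z = (x, y)" "z' = (x', y')" by fastforce
  define a b where "a = dist x x'" and "b = dist y y'"
  have "dist \<bar>H x - y\<bar> \<bar>H x' - y'\<bar> \<le> dist (H x) (H x') + b"
    by (simp add: b_def dist_real_def)
  also have "\<dots> \<le> C * a + b"
    using lipschitz_onD[OF assms] by (simp add: a_def)
  also have "\<dots> \<le> sqrt ((C\<^sup>2 + 1) * (a\<^sup>2 + b\<^sup>2))"
  proof (rule real_le_rsqrt)
    have "0 \<le> (C * b - a)\<^sup>2" by simp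
    then show "(C * a + b)\<^sup>2 \<le> (C\<^sup>2 + 1) * (a\<^sup>2 + b\<^sup>2)"
      by (simp add: power2_eq_square algebra_simps)
  qed
  also have "\<dots> = sqrt (C\<^sup>2 + 1) * dist z z'"
    by (simp add: z dist_Pair_Pair a_def b_def real_sqrt_mult)
  finally show "dist \<bar>H (fst z) - snd z\<bar> \<bar>H (fst z') - snd z'\<bar> \<le> sqrt (C\<^sup>2 + 1) * dist z z'"
    by (simp add: z)
qed simp

lemma lipschitz_integral_diff_le_coupling:
  fixes F :: "'b::{metric_space, second_countable_topology} \<Rightarrow> real"
  assumes sets_P: "sets P = sets borel" and sets_Q: "sets Q = sets borel"
    and \<gamma>: "\<gamma> \<in> couplings P Q" and F: "C-lipschitz_on UNIV F"
    and P: "integrable P F" and Q: "integrable Q F"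
  shows "ennreal \<bar>(\<integral>z. F z \<partial>P) - (\<integral>z. F z \<partial>Q)\<bar>
      \<le> ennreal C * (\<integral>\<^sup>+ w. ennreal (dist (fst w) (snd w)) \<partial>\<gamma>)"
proof -
  from \<gamma> have sets_\<gamma>: "sets \<gamma> = sets (P \<Otimes>\<^sub>M Q)"
    and P_eq: "distr \<gamma> P fst = P" and Q_eq: "distr \<gamma> Q snd = Q"
    by (auto simp: couplings_def)
  have fst: "fst \<in> measurable \<gamma> P" and snd: "snd \<in> measurable \<gamma> Q"
    by (simp_all add: measurable_cong_sets[OF sets_\<gamma> refl])
  have FP: "F \<in> borel_measurable P" and FQ: "F \<in> borel_measurable Q"
    using P Q by auto
  have int_fst: "integrable \<gamma> (\<lambda>w. F (fst w))" and int_snd: "integrable \<gamma> (\<lambda>w. F (snd w))"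
    using P Q P_eq Q_eq by (simp_all add: integrable_distr_eq[OF fst FP, symmetric]
        integrable_distr_eq[OF snd FQ, symmetric])
  have "(\<integral>z. F z \<partial>P) - (\<integral>z. F z \<partial>Q) = (\<integral>w. F (fst w) - F (snd w) \<partial>\<gamma>)"
    using integral_distr[OF fst FP] integral_distr[OF snd FQ] P_eq Q_eq int_fst int_snd by simp
  then have "ennreal \<bar>(\<integral>z. F z \<partial>P) - (\<integral>z. F z \<partial>Q)\<bar> \<le> ennreal (\<integral>w. \<bar>F (fst w) - F (snd w)\<bar> \<partial>\<gamma>)"
    using integral_abs_bound ennreal_leI by metis
  also have "\<dots> = (\<integral>\<^sup>+ w. ennreal \<bar>F (fst w) - F (snd w)\<bar> \<partial>\<gamma>)"
    using int_fst int_snd by (intro nn_integral_eq_integral[symmetric]) auto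
  also have "\<dots> \<le> (\<integral>\<^sup>+ w. ennreal C * ennreal (dist (fst w) (snd w)) \<partial>\<gamma>)"
    using lipschitz_onD[OF F] lipschitz_on_nonneg[OF F]
    by (intro nn_integral_mono) (simp add: dist_real_def flip: ennreal_mult)
  also have "\<dots> = ennreal C * (\<integral>\<^sup>+ w. ennreal (dist (fst w) (snd w)) \<partial>\<gamma>)"
  proof (rule nn_integral_cmult)
    have "sets \<gamma> = sets (borel \<Otimes>\<^sub>M borel)"
      using sets_\<gamma> sets_pair_measure_cong[OF sets_P sets_Q] by simp
    moreover have "(\<lambda>w::'b \<times> 'b. dist (fst w) (snd w)) \<in> borel_measurable (borel \<Otimes>\<^sub>M borel)"
      unfolding borel_prod by (intro borel_measurable_continuous_onI continuous_intros)
    ultimately show "(\<lambda>w. ennreal (dist (fst w) (snd w))) \<in> borel_measurable \<gamma>"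
      by (subst measurable_cong_sets) auto
  qed
  finally show ?thesis .
qed

lemma lipschitz_integral_diff_le_W1:
  fixes F :: "'b::{metric_space, second_countable_topology} \<Rightarrow> real"
  assumes sets_P: "sets P = sets borel" and sets_Q: "sets Q = sets borel"
    and C: "0 < C"
      \<comment> \<open>C = 0 is excluded: without couplings W1 P Q = \<infinity>, and 0 * \<infinity> = 0 in ennreal\<close>
    and F: "C-lipschitz_on UNIV F"
    and P: "integrable P F" and Q: "integrable Q F"
  shows "ennreal \<bar>(\<integral>z. F z \<partial>P) - (\<integral>z. F z \<partial>Q)\<bar> \<le> ennreal C * W1 P Q"
proof -
  define d where "d = ennreal \<bar>(\<integral>z. F z \<partial>P) - (\<integral>z. F z \<partial>Q)\<bar>"
  have "d / ennreal C \<le> W1 P Q"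
    unfolding W1_def d_def using C
    by (intro INF_greatest divide_le_posI_ennreal lipschitz_integral_diff_le_coupling[OF sets_P sets_Q _ F P Q])
      simp_all
  then have "ennreal C * (d / ennreal C) \<le> ennreal C * W1 P Q"
    by (rule mult_left_mono) simp
  moreover have "ennreal C * (d / ennreal C) = d"
    using C by (simp add: ennreal_times_divide mult.commute mult_divide_eq_ennreal)
  ultimately show ?thesis by (simp add: d_def)
qed

lemma sets_cond_law [simp]: "sets (cond_law M X A Y a) = sets borel"
  by (simp add: cond_law_def)

lemma AE_cond_law:
  assumes [measurable]: "X \<in> borel_measurable M" "A \<in> measurable M (count_space UNIV)"
      "Y \<in> borel_measurable M"
    and [measurable]: "Measurable.pred borel P"
    and "AE \<omega> in M. P (X \<omega>, Y \<omega>)"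
  shows "AE z in cond_law M X A Y a. P z"
proof -
  have E: "{\<omega> \<in> space M. A \<omega> = a} \<in> sets M" by measurable
  have "(\<lambda>\<omega>. (X \<omega>, Y \<omega>)) \<in> measurable (uniform_measure M {\<omega> \<in> space M. A \<omega> = a}) borel"
    by (simp add: measurable_cong_sets[OF sets_uniform_measure refl])
  moreover have "AE \<omega> in uniform_measure M {\<omega> \<in> space M. A \<omega> = a}. P (X \<omega>, Y \<omega>)"
    using assms(5) by (intro AE_uniform_measureI[OF E]) auto
  ultimately show ?thesis
    unfolding cond_law_def by (subst AE_distr_iff) auto
qed

lemma eps1_cond_law_cong:
  fixes X :: "'w \<Rightarrow> 'a::euclidean_space"
  assumes "X \<in> borel_measurable M" "A \<in> measurable M (count_space UNIV)" "Y \<in> borel_measurable M"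
    and "AE \<omega> in M. X \<omega> \<in> S"
    and "h \<in> borel_measurable borel" "H \<in> borel_measurable borel"
    and "\<And>x. x \<in> S \<Longrightarrow> H x = h x"
  shows "eps1 (cond_law M X A Y a) h = eps1 (cond_law M X A Y a) H"
    and "integrable (cond_law M X A Y a) (\<lambda>z. \<bar>h (fst z) - snd z\<bar>) \<longleftrightarrow>
      integrable (cond_law M X A Y a) (\<lambda>z. \<bar>H (fst z) - snd z\<bar>)"
proof -
  have residual_measurable: "(\<lambda>z::'a \<times> real. \<bar>f (fst z) - snd z\<bar>) \<in> borel_measurable borel"
    if [measurable]: "f \<in> borel_measurable borel" for f :: "'a \<Rightarrow> real"
    unfolding borel_prod[symmetric] by measurable
  have ae: "AE z in cond_law M X A Y a. \<bar>h (fst z) - snd z\<bar> = \<bar>H (fst z) - snd z\<bar>"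
    using assms(4,7) residual_measurable[OF assms(5)] residual_measurable[OF assms(6)]
    by (intro AE_cond_law[OF assms(1-3)]) (auto elim: AE_mp)
  have "(\<lambda>z. \<bar>f (fst z) - snd z\<bar>) \<in> borel_measurable (cond_law M X A Y a)"
    if "f \<in> borel_measurable borel" for f :: "'a \<Rightarrow> real"
    using residual_measurable[OF that] by (simp add: measurable_cong_sets[OF sets_cond_law refl])
  note measurable = this[OF assms(5)] this[OF assms(6)]
  show "eps1 (cond_law M X A Y a) h = eps1 (cond_law M X A Y a) H"
    unfolding eps1_def by (rule integral_cong_AE[OF measurable ae])
  show "integrable (cond_law M X A Y a) (\<lambda>z. \<bar>h (fst z) - snd z\<bar>) \<longleftrightarrow>
      integrable (cond_law M X A Y a) (\<lambda>z. \<bar>H (fst z) - snd z\<bar>)"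
    by (rule integrable_cong_AE[OF measurable ae])
qed

theorem proposition3:
  fixes M :: "'w measure"
    and X :: "'w \<Rightarrow> 'a::euclidean_space" and A :: "'w \<Rightarrow> nat" and Y :: "'w \<Rightarrow> real"
    and \<X> :: "'a set" and h :: "'a \<Rightarrow> real" and \<rho> :: real
  assumes "prob_space M"
    and "X \<in> borel_measurable M" and "A \<in> measurable M (count_space UNIV)"
    and "Y \<in> borel_measurable M"
    and "AE \<omega> in M. X \<omega> \<in> \<X>"
    and "AE \<omega> in M. A \<omega> \<in> {0, 1}"
    and "AE \<omega> in M. Y \<omega> \<in> {-1..1}"
    and "measure M {\<omega> \<in> space M. A \<omega> = 0} > 0"
    and "measure M {\<omega> \<in> space M. A \<omega> = 1} > 0"
    and "\<rho> \<ge> 0"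
    and "h \<in> borel_measurable borel"
    and "\<forall>x\<in>\<X>. \<forall>x'\<in>\<X>. \<bar>h x - h x'\<bar> \<le> \<rho> * norm (x - x')"
    and "integrable (cond_law M X A Y 0) (\<lambda>z. \<bar>h (fst z) - snd z\<bar>)"
    and "integrable (cond_law M X A Y 1) (\<lambda>z. \<bar>h (fst z) - snd z\<bar>)"
  shows "ennreal \<bar>eps1 (cond_law M X A Y 0) h - eps1 (cond_law M X A Y 1) h\<bar>
           \<le> ennreal (sqrt (\<rho>\<^sup>2 + 1)) * W1 (cond_law M X A Y 0) (cond_law M X A Y 1)"
proof -
  have "\<rho>-lipschitz_on \<X> h"
    using assms(10,12) by (intro lipschitz_onI) (simp_all add: dist_norm dist_real_def)
  then obtain H where H: "\<rho>-lipschitz_on UNIV H" and H_eq: "\<And>x. x \<in> \<X> \<Longrightarrow> H x = h x"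
    by (rule lipschitz_on_extend_real) auto
  have H_borel: "H \<in> borel_measurable borel"
    using H by (intro borel_measurable_continuous_onI lipschitz_on_continuous_on)
  note eps1_H = eps1_cond_law_cong[OF assms(2-5,11) H_borel H_eq]
  have "(sqrt (\<rho>\<^sup>2 + 1))-lipschitz_on UNIV (\<lambda>z. \<bar>H (fst z) - snd z\<bar>)"
    using H by (rule lipschitz_on_abs_residual)
  then have "ennreal \<bar>eps1 (cond_law M X A Y 0) H - eps1 (cond_law M X A Y 1) H\<bar>
      \<le> ennreal (sqrt (\<rho>\<^sup>2 + 1)) * W1 (cond_law M X A Y 0) (cond_law M X A Y 1)"
    unfolding eps1_def using assms(13,14)
    by (intro lipschitz_integral_diff_le_W1) (simp_all add: eps1_H(2) add_nonneg_pos)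
  then show ?thesis by (simp only: eps1_H(1))
qed

end
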